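(* Let $d>0$ be square-free, $\Gamma<\Gamma_d$ a subgroup of finite index, and $A=\begin{pmatrix}a&B\\ \bar B&c\end{pmatrix}$ with $a,c\in\mathbb{Z}$, $B\in\mathcal{O}_d$, $D=|B|^2-ac>0$, the Hermitian matrix associated to an immersed totally geodesic surface $\mathcal{S}\subset\mathbb{H}^3/\Gamma$. Then $\mathcal{S}$ is embedded in $\mathbb{H}^3/\Gamma$ if and only if $|\mathrm{Tr}(\gamma^*A\gamma A^{-1})|\ge 2$ for every $\gamma\in\Gamma$.
   Context: $\mathcal{O}_d$ is the ring of integers of $\mathbb{Q}(\sqrt{-d})$, $\Gamma_d=\mathrm{PSL}(2,\mathcal{O}_d)$; $\gamma^*$ is the conjugate transpose (the expression is independent of the sign of the matrix representative). The surface associated to $A$ is the image in $\mathbb{H}^3/\Gamma$ of the hyperbolic plane $H_{\mathcal{C}}$ bounded by the circle/line $\mathcal{C}=\{z: a|z|^2+Bz+\bar B\bar z+c=0\}$; note $\gamma^*A\gamma$ corresponds to $\gamma^{-1}\mathcal{C}$. It is embedded if for all $\gamma\in\Gamma$, $\gamma H_{\mathcal{C}}=H_{\mathcal{C}}$ or $\gamma H_{\mathcal{C}}\cap H_{\mathcal{C}}=\emptyset$. *)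

theory Defs
  imports "HOL-Analysis.Analysis" "HOL-Computational_Algebra.Squarefree"
begin

text \<open>Ring of integers O_d of Q(sqrt(-d)), as a set of complex numbers (d squarefree, d > 0).\<close>
definition omega_d :: "nat \<Rightarrow> complex" where
  "omega_d d = (if d mod 4 = 3 then (1 + \<i> * complex_of_real (sqrt (real d))) / 2
               else \<i> * complex_of_real (sqrt (real d)))"

definition Od :: "nat \<Rightarrow> complex set" where
  "Od d = {of_int x + of_int y * omega_d d | x y. True}"

definition SL2_Od :: "nat \<Rightarrow> (complex^2^2) set" where
  "SL2_Od d = {M. (\<forall>i j. M$i$j \<in> Od d) \<and> det M = 1}"

text \<open>A subgroup of finite index in PSL(2,O_d) is represented by its preimage in SL(2,O_d):
  a subgroup of SL(2,O_d) containing -I, of finite index.\<close>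
definition finite_index_subgroup :: "nat \<Rightarrow> (complex^2^2) set \<Rightarrow> bool" where
  "finite_index_subgroup d G \<longleftrightarrow>
     G \<subseteq> SL2_Od d \<and> mat 1 \<in> G \<and> - mat 1 \<in> G \<and>
     (\<forall>g\<in>G. \<forall>h\<in>G. g ** h \<in> G) \<and> (\<forall>g\<in>G. matrix_inv g \<in> G) \<and>
     finite ((\<lambda>g. (\<lambda>h. g ** h) ` G) ` SL2_Od d)"

definition ctranspose :: "complex^2^2 \<Rightarrow> complex^2^2" where
  "ctranspose M = (\<chi> i j. cnj (M$j$i))"

definition H3 :: "(complex \<times> real) set" where
  "H3 = {(z, t). t > 0}"

text \<open>Standard action of SL(2,C) on the upper half-space (Poincare extension of the Moebius map
  z \<mapsto> (alpha z + beta)/(gamma z + delta)).\<close>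
definition act_H3 :: "complex^2^2 \<Rightarrow> complex \<times> real \<Rightarrow> complex \<times> real" where
  "act_H3 M p = (case p of (z, t) \<Rightarrow>
     (let al = M$1$1; be = M$1$2; ga = M$2$1; de = M$2$2;
          N = (cmod (ga * z + de))^2 + (cmod ga)^2 * t^2
      in (((al * z + be) * cnj (ga * z + de) + al * cnj ga * complex_of_real (t^2)) / complex_of_real N,
          t / N)))"

text \<open>The hyperbolic plane H_C in H^3 bounded by the circle/line
  C = {z. (z,1)^* A (z,1) = 0}, i.e. the points (z,t), t>0, with
  A11 (|z|^2 + t^2) + cnj z A12 + A21 z + A22 = 0.\<close>
definition hplane :: "complex^2^2 \<Rightarrow> (complex \<times> real) set" where
  "hplane A = {(z, t). t > 0 \<and>
      A$1$1 * complex_of_real ((cmod z)^2 + t^2) + cnj z * A$1$2 + A$2$1 * z + A$2$2 = 0}"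

definition embedded_surface :: "(complex^2^2) set \<Rightarrow> complex^2^2 \<Rightarrow> bool" where
  "embedded_surface G A \<longleftrightarrow>
     (\<forall>g\<in>G. act_H3 g ` hplane A = hplane A \<or> act_H3 g ` hplane A \<inter> hplane A = {})"

end

theory Submission
  imports Defs
begin

text \<open>
  Identify the upper half-space with the hyperboloid \<open>\<langle>p, p\<rangle> = 1\<close> in Minkowski space
  \<open>\<real> \<times> \<real> \<times> \<complex>\<close>. The plane of a Hermitian form \<open>A\<close> with \<open>det A < 0\<close> becomes the set of
  points orthogonal to a spacelike normal \<open>x\<^sub>A\<close> with \<open>\<langle>x\<^sub>A, x\<^sub>A\<rangle> = 4 det A\<close>, and
  \<open>Tr (A' A\<^sup>-\<^sup>1) = 2 \<langle>x\<^sub>A, x\<^sub>A\<^sub>'\<rangle> / \<langle>x\<^sub>A, x\<^sub>A\<rangle>\<close> for \<open>A' = \<gamma>\<^sup>* A \<gamma>\<close>.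
  Since \<open>\<gamma>\<close> maps the plane of \<open>A'\<close> onto the plane of \<open>A\<close>, the translate by \<open>\<gamma>\<close> of the plane
  of \<open>A\<close> is equal to it or disjoint from it iff the planes of \<open>A\<close> and \<open>A'\<close> are.
  For normals \<open>x, y\<close> of the same norm \<open>-K\<close> the latter holds iff \<open>\<bar>\<langle>x, y\<rangle>\<bar> \<ge> K\<close>:
  otherwise \<open>x, y\<close> span a negative definite plane whose orthogonal complement contains a timelike
  line, which meets both hyperbolic planes, and these differ; conversely a common point is a
  timelike vector orthogonal to \<open>x\<close> and \<open>y\<close>, and reverse Cauchy-Schwarz forces \<open>y \<parallel> x\<close>.
\<close>

section \<open>Minkowski space\<close>

definition minkowski_inner :: "real \<times> 'a::real_inner \<Rightarrow> real \<times> 'a \<Rightarrow> real" where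
  "minkowski_inner x y = fst x * fst y - snd x \<bullet> snd y"

abbreviation timelike :: "real \<times> 'a::real_inner \<Rightarrow> bool" where
  "timelike x \<equiv> 0 < minkowski_inner x x"

lemma minkowski_inner_commute: "minkowski_inner x y = minkowski_inner y x"
  by (simp add: minkowski_inner_def inner_commute mult.commute)

lemma minkowski_inner_add_left [simp]:
  "minkowski_inner (x + y) z = minkowski_inner x z + minkowski_inner y z"
  by (simp add: minkowski_inner_def inner_add_left algebra_simps)

lemma minkowski_inner_add_right [simp]:
  "minkowski_inner x (y + z) = minkowski_inner x y + minkowski_inner x z"
  by (simp add: minkowski_inner_def inner_add_right algebra_simps)

lemma minkowski_inner_diff_left [simp]:
  "minkowski_inner (x - y) z = minkowski_inner x z - minkowski_inner y z"
  by (simp add: minkowski_inner_def inner_diff_left algebra_simps)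

lemma minkowski_inner_diff_right [simp]:
  "minkowski_inner x (y - z) = minkowski_inner x y - minkowski_inner x z"
  by (simp add: minkowski_inner_def algebra_simps)

lemma minkowski_inner_scaleR_left [simp]:
  "minkowski_inner (c *\<^sub>R x) y = c * minkowski_inner x y"
  by (simp add: minkowski_inner_def algebra_simps)

lemma minkowski_inner_scaleR_right [simp]:
  "minkowski_inner x (c *\<^sub>R y) = c * minkowski_inner x y"
  by (simp add: minkowski_inner_def algebra_simps)

lemma minkowski_inner_minus_left [simp]: "minkowski_inner (- x) y = - minkowski_inner x y"
  by (simp add: minkowski_inner_def)

lemma minkowski_inner_minus_right [simp]: "minkowski_inner x (- y) = - minkowski_inner x y"
  by (simp add: minkowski_inner_def)

lemma timelike_orthogonal_nonneg_eq_0: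
  fixes p z :: "real \<times> 'a::real_inner"
  assumes "timelike p" and "minkowski_inner z p = 0" and "0 \<le> minkowski_inner z z"
  shows "z = 0"
proof -
  obtain p0 ps z0 zs where p: "p = (p0, ps)" and z: "z = (z0, zs)" by fastforce
  have "norm ps ^ 2 < p0 ^ 2" "norm zs ^ 2 \<le> z0 ^ 2" and orth: "z0 * p0 = zs \<bullet> ps"
    using assms by (simp_all add: p z minkowski_inner_def dot_square_norm power2_eq_square)
  then have np: "norm ps < \<bar>p0\<bar>" and nz: "norm zs \<le> \<bar>z0\<bar>"
    using power2_less_imp_less[of "norm ps" "\<bar>p0\<bar>"] abs_le_square_iff[of "norm zs" z0] by simp_all
  have "\<bar>z0\<bar> * \<bar>p0\<bar> \<le> norm zs * norm ps"
    using Cauchy_Schwarz_ineq2[of zs ps] orth by (simp add: abs_mult)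
  also have "\<dots> \<le> \<bar>z0\<bar> * norm ps" using nz by (simp add: mult_right_mono)
  finally have "z0 = 0" using np by (smt (verit) mult_strict_left_mono)
  with nz show ?thesis by (simp add: z zero_prod_def)
qed

lemma spacelike_pair_timelike_normal:
  fixes x y :: "real \<times> 'a::real_inner"
  assumes x: "minkowski_inner x x < 0"
    and gram: "(minkowski_inner x y)\<^sup>2 < minkowski_inner x x * minkowski_inner y y"
  shows "\<exists>p. timelike p \<and> minkowski_inner x p = 0 \<and> minkowski_inner y p = 0"
proof -
  define a b \<beta> where "a = minkowski_inner x x" and "b = minkowski_inner y y"
    and "\<beta> = minkowski_inner x y"
  define \<Delta> where "\<Delta> = a * b - \<beta>\<^sup>2"
  define T :: "real \<times> 'a" where "T = (1, 0)"
  have xT: "minkowski_inner x T = fst x" and yT: "minkowski_inner y T = fst y"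
    by (simp_all add: T_def minkowski_inner_def)
  define c1 c2 where "c1 = \<beta> * fst y - b * fst x" and "c2 = \<beta> * fst x - a * fst y"
  \<comment> \<open>the component of \<open>T\<close> orthogonal to \<open>x\<close> and \<open>y\<close>, scaled by the Gram determinant \<open>\<Delta>\<close>\<close>
  define p where "p = \<Delta> *\<^sub>R T + c1 *\<^sub>R x + c2 *\<^sub>R y"
  have \<Delta>: "0 < \<Delta>" using gram by (simp add: \<Delta>_def a_def b_def \<beta>_def)
  have xp: "minkowski_inner x p = 0" and yp: "minkowski_inner y p = 0"
    by (simp_all add: p_def xT yT minkowski_inner_commute[of y x] c1_def c2_def \<Delta>_def
        flip: a_def b_def \<beta>_def) (simp_all add: algebra_simps power2_eq_square)
  have "minkowski_inner p p = minkowski_inner (\<Delta> *\<^sub>R T + c1 *\<^sub>R x + c2 *\<^sub>R y) p"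
    by (simp add: p_def)
  also have "\<dots> = \<Delta> * minkowski_inner T p" by (simp add: xp yp)
  also have "minkowski_inner T p = \<Delta> + (c1 * fst x + c2 * fst y)"
    by (simp add: p_def T_def minkowski_inner_def)
  finally have pp: "minkowski_inner p p = \<Delta> * (\<Delta> + (c1 * fst x + c2 * fst y))" .
  moreover have "0 \<le> c1 * fst x + c2 * fst y"
  proof -
    have "(- a) * (c1 * fst x + c2 * fst y) = (a * fst y - \<beta> * fst x)\<^sup>2 + \<Delta> * (fst x)\<^sup>2"
      by (simp add: c1_def c2_def \<Delta>_def algebra_simps power2_eq_square)
    also have "\<dots> \<ge> 0" using \<Delta> by simp
    finally show ?thesis using x by (simp add: a_def mult_le_0_iff)
  qed
  ultimately have "timelike p" using \<Delta> by (simp add: add_pos_nonneg)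
  with xp yp show ?thesis by blast
qed

lemma timelike_not_orthogonal:
  fixes w :: "real \<times> 'a::real_inner"
  assumes "w \<noteq> 0"
  shows "\<exists>q. timelike q \<and> minkowski_inner q w \<noteq> 0"
proof (cases "fst w = 0")
  case True
  then have "snd w \<noteq> 0" using assms by (simp add: prod_eq_iff)
  then show ?thesis using True
    by (intro exI[of _ "(2 * norm (snd w), snd w)"])
       (simp add: minkowski_inner_def dot_square_norm power2_eq_square)
next
  case False
  then show ?thesis by (intro exI[of _ "(1, 0)"]) (simp add: minkowski_inner_def)
qed

lemma timelike_normal_separating:
  fixes x y :: "real \<times> 'a::real_inner"
  assumes x: "minkowski_inner x x < 0" and indep: "\<And>c. y \<noteq> c *\<^sub>R x"
  shows "\<exists>p. timelike p \<and> minkowski_inner x p = 0 \<and> minkowski_inner y p \<noteq> 0"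
proof -
  define a \<beta> where "a = minkowski_inner x x" and "\<beta> = minkowski_inner x y"
  have "a \<noteq> 0" using x by (simp add: a_def)
  have "\<beta> *\<^sub>R x - a *\<^sub>R y \<noteq> 0"
  proof
    assume "\<beta> *\<^sub>R x - a *\<^sub>R y = 0"
    then have "(1 / a) *\<^sub>R (a *\<^sub>R y) = (1 / a) *\<^sub>R (\<beta> *\<^sub>R x)" by simp
    then show False using indep[of "\<beta> / a"] \<open>a \<noteq> 0\<close> by simp
  qed
  then obtain q where q: "timelike q" "minkowski_inner q (\<beta> *\<^sub>R x - a *\<^sub>R y) \<noteq> 0"
    using timelike_not_orthogonal by blast
  define p where "p = (- a) *\<^sub>R q + minkowski_inner q x *\<^sub>R x"
  have xp: "minkowski_inner x p = 0"
    by (simp add: p_def minkowski_inner_commute[of x q] flip: a_def)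
  have "minkowski_inner p p = minkowski_inner ((- a) *\<^sub>R q + minkowski_inner q x *\<^sub>R x) p"
    by (simp add: p_def)
  also have "\<dots> = (- a) * minkowski_inner q p" by (simp add: xp)
  also have "\<dots> = a\<^sup>2 * minkowski_inner q q + (- a) * (minkowski_inner q x)\<^sup>2"
    by (simp add: p_def algebra_simps power2_eq_square)
  finally have pp:
    "minkowski_inner p p = a\<^sup>2 * minkowski_inner q q + (- a) * (minkowski_inner q x)\<^sup>2" .
  have "0 < a\<^sup>2 * minkowski_inner q q" using q(1) \<open>a \<noteq> 0\<close> by simp
  moreover have "0 \<le> (- a) * (minkowski_inner q x)\<^sup>2"
    using x by (simp add: a_def mult_nonpos_nonneg)
  ultimately have "timelike p" unfolding pp by linarith
  moreover have "minkowski_inner y p = minkowski_inner q (\<beta> *\<^sub>R x - a *\<^sub>R y)"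
    by (simp add: p_def \<beta>_def minkowski_inner_commute[of y q] minkowski_inner_commute[of y x]
        algebra_simps)
  ultimately show ?thesis using xp q(2) by metis
qed

lemma orthogonal_timelike_collinear:
  fixes x y p :: "real \<times> 'a::real_inner"
  assumes "timelike p" and "minkowski_inner x p = 0" and "minkowski_inner y p = 0"
    and x: "minkowski_inner x x < 0"
    and gram: "minkowski_inner x x * minkowski_inner y y \<le> (minkowski_inner x y)\<^sup>2"
  shows "y = (minkowski_inner x y / minkowski_inner x x) *\<^sub>R x"
proof -
  define a \<beta> where "a = minkowski_inner x x" and "\<beta> = minkowski_inner x y"
  define w where "w = a *\<^sub>R y - \<beta> *\<^sub>R x"
  have "minkowski_inner w w = a * (a * minkowski_inner y y - \<beta>\<^sup>2)"
    by (simp add: w_def minkowski_inner_commute[of y x] algebra_simps power2_eq_square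
        flip: a_def \<beta>_def)
  also have "\<dots> \<ge> 0" using x gram by (simp add: a_def \<beta>_def mult_nonpos_nonpos)
  finally have "0 \<le> minkowski_inner w w" .
  moreover have "minkowski_inner w p = 0" by (simp add: w_def assms(2,3))
  ultimately have "w = 0" using timelike_orthogonal_nonneg_eq_0[OF assms(1)] by blast
  then have "(1 / a) *\<^sub>R (a *\<^sub>R y) = (1 / a) *\<^sub>R (\<beta> *\<^sub>R x)" by (simp add: w_def)
  then show ?thesis using x by (simp add: a_def \<beta>_def)
qed

section \<open>The hyperboloid model\<close>

text \<open>The standard isometry of the upper half-space onto the upper sheet of the hyperboloid.\<close>
definition hyperboloid_point :: "complex \<times> real \<Rightarrow> real \<times> real \<times> complex" where
  "hyperboloid_point = (\<lambda>(z, t).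
     (((cmod z)\<^sup>2 + t\<^sup>2 + 1) / (2 * t), ((cmod z)\<^sup>2 + t\<^sup>2 - 1) / (2 * t), z / of_real t))"

definition hyperbolic_plane :: "real \<times> real \<times> complex \<Rightarrow> (complex \<times> real) set" where
  "hyperbolic_plane n = {p \<in> H3. minkowski_inner n (hyperboloid_point p) = 0}"

lemma minkowski_inner_hyperboloid_point:
  assumes "p \<in> H3"
  shows "minkowski_inner (hyperboloid_point p) (hyperboloid_point p) = 1"
proof -
  obtain z t where p: "p = (z, t)" and "t > 0" using assms by (auto simp: H3_def)
  then show ?thesis
    by (simp add: p hyperboloid_point_def minkowski_inner_def dot_square_norm[where 'a = complex]
        norm_divide field_simps power2_eq_square)
qed

lemma future_timelike_line_meets_H3:
  fixes P :: "real \<times> real \<times> complex"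
  assumes "timelike P" and "0 < fst P"
  shows "\<exists>p\<in>H3. hyperboloid_point p = (1 / sqrt (minkowski_inner P P)) *\<^sub>R P"
proof -
  obtain e0 e1 w where P: "P = (e0, e1, w)" by (cases P) auto
  define s where "s = sqrt (minkowski_inner P P)"
  have ss: "s\<^sup>2 = e0\<^sup>2 - e1\<^sup>2 - (cmod w)\<^sup>2" and "0 < s"
    using assms(1)
    by (simp_all add: s_def P minkowski_inner_def dot_square_norm[where 'a = complex] power2_eq_square)
  have "e1\<^sup>2 < e0\<^sup>2" using ss \<open>0 < s\<close> by (smt (verit) zero_le_power2 zero_less_power2)
  then have "\<bar>e1\<bar> < e0" using power2_less_imp_less[of "\<bar>e1\<bar>" e0] assms(2) P by simp
  then have "0 < e0 - e1" and "0 < e0 + e1" by linarith+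
  define t z where "t = s / (e0 - e1)" and "z = w / of_real (e0 - e1)"
  have "0 < t" using \<open>0 < s\<close> \<open>0 < e0 - e1\<close> by (simp add: t_def)
  have "(cmod z)\<^sup>2 + t\<^sup>2 = ((cmod w)\<^sup>2 + s\<^sup>2) / (e0 - e1)\<^sup>2"
    by (simp add: z_def t_def norm_divide power_divide add_divide_distrib del: of_real_diff)
  also have "(cmod w)\<^sup>2 + s\<^sup>2 = (e0 + e1) * (e0 - e1)"
    unfolding ss by (simp add: algebra_simps power2_eq_square)
  also have "(e0 + e1) * (e0 - e1) / (e0 - e1)\<^sup>2 = (e0 + e1) / (e0 - e1)"
    using \<open>0 < e0 - e1\<close> by (simp add: power2_eq_square)
  finally have S: "(cmod z)\<^sup>2 + t\<^sup>2 = (e0 + e1) / (e0 - e1)" .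
  have "hyperboloid_point (z, t) = (((e0 + e1) / (e0 - e1) + 1) / (2 * t),
      ((e0 + e1) / (e0 - e1) - 1) / (2 * t), z / of_real t)"
    by (simp add: hyperboloid_point_def S)
  also have "\<dots> = (1 / s) *\<^sub>R P"
    using \<open>0 < s\<close> \<open>0 < e0 - e1\<close>
    by (simp add: P t_def z_def field_simps complex_eq_iff del: of_real_diff)
  finally show ?thesis using \<open>0 < t\<close> by (auto simp: H3_def s_def)
qed

lemma timelike_line_meets_H3:
  fixes P :: "real \<times> real \<times> complex"
  assumes "timelike P"
  shows "\<exists>p\<in>H3. \<forall>n. p \<in> hyperbolic_plane n \<longleftrightarrow> minkowski_inner n P = 0"
proof -
  have "fst P \<noteq> 0"
  proof
    assume "fst P = 0"
    then have "minkowski_inner P P = - (snd P \<bullet> snd P)" by (simp add: minkowski_inner_def)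
    then show False using assms inner_ge_zero[of "snd P"] by linarith
  qed
  then obtain Q c where Q: "timelike Q" "0 < fst Q" "P = c *\<^sub>R Q" "c \<noteq> 0"
  proof (cases "0 < fst P")
    case True
    then show ?thesis using that[of P 1] assms by simp
  next
    case False
    then show ?thesis using that[of "- P" "- 1"] assms \<open>fst P \<noteq> 0\<close> by simp
  qed
  then obtain p where "p \<in> H3" and p: "hyperboloid_point p = (1 / sqrt (minkowski_inner Q Q)) *\<^sub>R Q"
    using future_timelike_line_meets_H3 by blast
  have "p \<in> hyperbolic_plane n \<longleftrightarrow> minkowski_inner n P = 0" for n
    using \<open>p \<in> H3\<close> Q by (simp add: hyperbolic_plane_def p)
  with \<open>p \<in> H3\<close> show ?thesis by blast
qed

lemma hyperbolic_planes_cross: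
  fixes x y :: "real \<times> real \<times> complex"
  assumes x: "minkowski_inner x x < 0"
    and gram: "(minkowski_inner x y)\<^sup>2 < minkowski_inner x x * minkowski_inner y y"
  shows "hyperbolic_plane x \<inter> hyperbolic_plane y \<noteq> {}" and "hyperbolic_plane x \<noteq> hyperbolic_plane y"
proof -
  obtain p where "timelike p" "minkowski_inner x p = 0" "minkowski_inner y p = 0"
    using spacelike_pair_timelike_normal[OF x gram] by blast
  then show "hyperbolic_plane x \<inter> hyperbolic_plane y \<noteq> {}"
    using timelike_line_meets_H3 by blast
  have "y \<noteq> c *\<^sub>R x" for c
  proof
    assume "y = c *\<^sub>R x"
    then show False using gram by (simp add: power2_eq_square)
  qed
  then obtain p' where "timelike p'" "minkowski_inner x p' = 0" "minkowski_inner y p' \<noteq> 0"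
    using timelike_normal_separating[OF x] by blast
  then obtain q where "q \<in> hyperbolic_plane x" "q \<notin> hyperbolic_plane y"
    using timelike_line_meets_H3 by blast
  then show "hyperbolic_plane x \<noteq> hyperbolic_plane y" by blast
qed

lemma hyperbolic_planes_meet_imp_eq:
  fixes x y :: "real \<times> real \<times> complex"
  assumes x: "minkowski_inner x x < 0" and y: "minkowski_inner y y < 0"
    and gram: "minkowski_inner x x * minkowski_inner y y \<le> (minkowski_inner x y)\<^sup>2"
    and meet: "hyperbolic_plane x \<inter> hyperbolic_plane y \<noteq> {}"
  shows "hyperbolic_plane x = hyperbolic_plane y"
proof -
  obtain q where "q \<in> H3" and qx: "minkowski_inner x (hyperboloid_point q) = 0"
    and qy: "minkowski_inner y (hyperboloid_point q) = 0"
    using meet by (auto simp: hyperbolic_plane_def)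
  then have yx: "y = (minkowski_inner x y / minkowski_inner x x) *\<^sub>R x"
    using orthogonal_timelike_collinear[OF _ qx qy x gram]
    by (simp add: minkowski_inner_hyperboloid_point)
  have "0 < minkowski_inner x x * minkowski_inner y y" using x y by (simp add: mult_neg_neg)
  then have "minkowski_inner x y \<noteq> 0" using gram by auto
  then have "minkowski_inner y n = 0 \<longleftrightarrow> minkowski_inner x n = 0" for n
    using x by (subst yx) simp
  then show ?thesis by (simp add: hyperbolic_plane_def)
qed

lemma hyperbolic_planes_eq_or_disjoint_iff:
  fixes x y :: "real \<times> real \<times> complex"
  assumes x: "minkowski_inner x x < 0" and y: "minkowski_inner y y = minkowski_inner x x"
  shows "(hyperbolic_plane x = hyperbolic_plane y \<or> hyperbolic_plane x \<inter> hyperbolic_plane y = {})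
    \<longleftrightarrow> (minkowski_inner x x)\<^sup>2 \<le> (minkowski_inner x y)\<^sup>2" (is "?planes \<longleftrightarrow> ?gram")
proof
  assume ?planes
  show ?gram
  proof (rule ccontr)
    assume "\<not> ?gram"
    then have "(minkowski_inner x y)\<^sup>2 < minkowski_inner x x * minkowski_inner y y"
      using y by (simp add: power2_eq_square)
    from hyperbolic_planes_cross[OF x this] \<open>?planes\<close> show False by blast
  qed
next
  assume ?gram
  then have gram: "minkowski_inner x x * minkowski_inner y y \<le> (minkowski_inner x y)\<^sup>2"
    using y by (simp add: power2_eq_square)
  show ?planes using hyperbolic_planes_meet_imp_eq[OF x _ gram] x y by auto
qed

section \<open>Hermitian forms and hyperbolic planes\<close>

definition mat2 :: "'a::zero \<Rightarrow> 'a \<Rightarrow> 'a \<Rightarrow> 'a \<Rightarrow> 'a^2^2" where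
  "mat2 a b c d = vector [vector [a, b], vector [c, d]]"

lemma mat2_nth [simp]:
  "mat2 a b c d $ 1 $ 1 = a" "mat2 a b c d $ 1 $ 2 = b"
  "mat2 a b c d $ 2 $ 1 = c" "mat2 a b c d $ 2 $ 2 = d"
  by (simp_all add: mat2_def)

lemma mat2_eta: "M = mat2 (M$1$1) (M$1$2) (M$2$1) (M$2$2)"
  by (simp add: vec_eq_iff forall_2)

lemma mat2_eq_iff: "mat2 a b c d = mat2 a' b' c' d' \<longleftrightarrow> a = a' \<and> b = b' \<and> c = c' \<and> d = d'"
  by (simp add: vec_eq_iff forall_2)

lemma mat2_mult:
  fixes a b c d :: "'a::semiring_1"
  shows "mat2 a b c d ** mat2 e f g h = mat2 (a*e + b*g) (a*f + b*h) (c*e + d*g) (c*f + d*h)"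
  by (simp add: vec_eq_iff forall_2 matrix_matrix_mult_def sum_2)

lemma mat_1_eq_mat2: "(mat 1 :: 'a::semiring_1^2^2) = mat2 1 0 0 1"
  by (simp add: vec_eq_iff forall_2 mat_def)

lemma det_mat2: "det (mat2 a b c d) = a*d - b*c"
  by (simp add: det_2)

lemma trace_mat2: "trace (mat2 a b c d) = a + d"
  by (simp add: trace_def sum_2)

lemma matrix_inv_unique:
  fixes A :: "'a::semiring_1^'n^'m"
  assumes "A ** M = mat 1" and "M ** A = mat 1"
  shows "matrix_inv A = M"
proof -
  have inv: "A ** matrix_inv A = mat 1 \<and> matrix_inv A ** A = mat 1"
    unfolding matrix_inv_def by (rule someI[of _ M]) (use assms in blast)
  have "matrix_inv A = matrix_inv A ** (A ** M)" using assms by simp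
  also have "\<dots> = M" using inv by (simp add: matrix_mul_assoc)
  finally show ?thesis .
qed

lemma matrix_inv_mat2:
  fixes a b c d :: "'a::field"
  assumes "a*d - b*c \<noteq> 0"
  shows "matrix_inv (mat2 a b c d) =
    mat2 (d / (a*d - b*c)) (- b / (a*d - b*c)) (- c / (a*d - b*c)) (a / (a*d - b*c))"
proof -
  define D where "D = a*d - b*c"
  have "D \<noteq> 0" using assms by (simp add: D_def)
  then have "matrix_inv (mat2 a b c d) = mat2 (d / D) (- b / D) (- c / D) (a / D)"
    by (intro matrix_inv_unique)
      (simp_all add: mat2_mult mat_1_eq_mat2 mat2_eq_iff divide_simps,
       simp_all add: D_def algebra_simps)
  then show ?thesis by (simp add: D_def)
qed

lemma ctranspose_mat2 [simp]: "ctranspose (mat2 a b c d) = mat2 (cnj a) (cnj c) (cnj b) (cnj d)"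
  by (simp add: vec_eq_iff forall_2 ctranspose_def)

lemma ctranspose_mult: "ctranspose (X ** Y) = ctranspose Y ** ctranspose X"
  by (subst (1 2 3 4) mat2_eta) (simp add: mat2_mult mat2_eq_iff algebra_simps)

lemma det_ctranspose: "det (ctranspose X) = cnj (det X)"
  by (subst (1 2) mat2_eta) (simp add: det_mat2)

lemma ctranspose_ctranspose [simp]: "ctranspose (ctranspose X) = X"
  by (simp add: ctranspose_def vec_eq_iff)

definition herm_mat :: "real \<Rightarrow> real \<Rightarrow> complex \<Rightarrow> complex^2^2" where
  "herm_mat m1 m4 \<mu> = mat2 (of_real m1) \<mu> (cnj \<mu>) (of_real m4)"

text \<open>Normalised so that \<open>minkowski_inner (herm_vec m1 m4 \<mu>) (hyperboloid_point (z, t))\<close> is the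
  left-hand side of the equation of \<open>hplane (herm_mat m1 m4 \<mu>)\<close> at \<open>(z, t)\<close> divided by \<open>t\<close>.\<close>
definition herm_vec :: "real \<Rightarrow> real \<Rightarrow> complex \<Rightarrow> real \<times> real \<times> complex" where
  "herm_vec m1 m4 \<mu> = (m1 + m4, m4 - m1, - 2 * \<mu>)"

lemma hermitian_eq_herm_mat:
  assumes "ctranspose M = M"
  shows "M = herm_mat (Re (M$1$1)) (Re (M$2$2)) (M$1$2)"
proof -
  have "cnj (M$1$1) = M$1$1" "cnj (M$2$2) = M$2$2" "cnj (M$1$2) = M$2$1"
    using arg_cong[OF assms, of "\<lambda>X. X$1$1"] arg_cong[OF assms, of "\<lambda>X. X$2$2"]
      arg_cong[OF assms, of "\<lambda>X. X$2$1"]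
    by (simp_all add: ctranspose_def)
  then show ?thesis
    by (subst mat2_eta) (simp add: herm_mat_def mat2_eq_iff complex_eq_iff)
qed

lemma det_herm_mat: "det (herm_mat m1 m4 \<mu>) = of_real (m1 * m4 - (cmod \<mu>)\<^sup>2)"
  by (simp add: herm_mat_def det_mat2 complex_norm_square del: of_real_power)

lemma minkowski_inner_herm_vec:
  "minkowski_inner (herm_vec m1 m4 \<mu>) (herm_vec n1 n4 \<nu>) = 2 * (m1 * n4 + m4 * n1 - 2 * (\<mu> \<bullet> \<nu>))"
  by (simp add: herm_vec_def minkowski_inner_def inner_complex_def algebra_simps)

lemma minkowski_inner_herm_vec_self:
  "minkowski_inner (herm_vec m1 m4 \<mu>) (herm_vec m1 m4 \<mu>) = 4 * (m1 * m4 - (cmod \<mu>)\<^sup>2)"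
  by (simp add: minkowski_inner_herm_vec dot_square_norm)

lemma trace_mult_matrix_inv_herm_mat:
  assumes "m1 * m4 - (cmod \<mu>)\<^sup>2 \<noteq> 0"
  shows "trace (herm_mat n1 n4 \<nu> ** matrix_inv (herm_mat m1 m4 \<mu>)) =
    of_real (2 * minkowski_inner (herm_vec m1 m4 \<mu>) (herm_vec n1 n4 \<nu>)
      / minkowski_inner (herm_vec m1 m4 \<mu>) (herm_vec m1 m4 \<mu>))"
proof -
  define D where "D = m1 * m4 - (cmod \<mu>)\<^sup>2"
  have D: "of_real m1 * of_real m4 - \<mu> * cnj \<mu> = complex_of_real D"
    using det_herm_mat[of m1 m4 \<mu>] by (simp add: D_def herm_mat_def det_mat2)
  have "D \<noteq> 0" using assms by (simp add: D_def)
  have "trace (herm_mat n1 n4 \<nu> ** matrix_inv (herm_mat m1 m4 \<mu>)) =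
      (of_real n1 * of_real m4 - \<nu> * cnj \<mu> - cnj \<nu> * \<mu> + of_real n4 * of_real m1) / of_real D"
    using \<open>D \<noteq> 0\<close>
    by (simp add: herm_mat_def matrix_inv_mat2 D mat2_mult trace_mat2 field_simps)
  also have "\<dots> = of_real ((m1 * n4 + m4 * n1 - 2 * (\<mu> \<bullet> \<nu>)) / D)"
    by (simp add: complex_eq_iff inner_complex_def algebra_simps)
  also have "(m1 * n4 + m4 * n1 - 2 * (\<mu> \<bullet> \<nu>)) / D
      = 2 * (2 * (m1 * n4 + m4 * n1 - 2 * (\<mu> \<bullet> \<nu>))) / (2 * (2 * D))"
    using \<open>D \<noteq> 0\<close> by (simp add: field_simps)
  also have "\<dots> = 2 * minkowski_inner (herm_vec m1 m4 \<mu>) (herm_vec n1 n4 \<nu>)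
      / minkowski_inner (herm_vec m1 m4 \<mu>) (herm_vec m1 m4 \<mu>)"
    by (simp add: minkowski_inner_herm_vec D_def dot_square_norm algebra_simps)
  finally show ?thesis .
qed

lemma two_le_cmod_trace_herm_mat_iff:
  assumes "m1 * m4 < (cmod \<mu>)\<^sup>2"
  shows "2 \<le> cmod (trace (herm_mat n1 n4 \<nu> ** matrix_inv (herm_mat m1 m4 \<mu>))) \<longleftrightarrow>
    (minkowski_inner (herm_vec m1 m4 \<mu>) (herm_vec m1 m4 \<mu>))\<^sup>2
      \<le> (minkowski_inner (herm_vec m1 m4 \<mu>) (herm_vec n1 n4 \<nu>))\<^sup>2"
proof -
  define a \<beta> where "a = minkowski_inner (herm_vec m1 m4 \<mu>) (herm_vec m1 m4 \<mu>)"
    and "\<beta> = minkowski_inner (herm_vec m1 m4 \<mu>) (herm_vec n1 n4 \<nu>)"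
  have "0 < \<bar>a\<bar>" using assms by (simp add: a_def minkowski_inner_herm_vec_self)
  have "cmod (trace (herm_mat n1 n4 \<nu> ** matrix_inv (herm_mat m1 m4 \<mu>))) = 2 * \<bar>\<beta>\<bar> / \<bar>a\<bar>"
    using assms by (simp add: trace_mult_matrix_inv_herm_mat norm_divide abs_mult a_def \<beta>_def
        del: of_real_divide of_real_mult)
  also have "2 \<le> 2 * \<bar>\<beta>\<bar> / \<bar>a\<bar> \<longleftrightarrow> \<bar>a\<bar> \<le> \<bar>\<beta>\<bar>"
    using \<open>0 < \<bar>a\<bar>\<close> by (simp add: le_divide_eq)
  finally show ?thesis by (simp add: abs_le_square_iff flip: a_def \<beta>_def)
qed

lemma hplane_herm_mat: "hplane (herm_mat m1 m4 \<mu>) = hyperbolic_plane (herm_vec m1 m4 \<mu>)"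
proof -
  have "(z, t) \<in> hplane (herm_mat m1 m4 \<mu>) \<longleftrightarrow> (z, t) \<in> hyperbolic_plane (herm_vec m1 m4 \<mu>)"
    for z t
  proof -
    define Q where "Q = m1 * ((cmod z)\<^sup>2 + t\<^sup>2) + 2 * (z \<bullet> \<mu>) + m4"
    have "of_real m1 * of_real ((cmod z)\<^sup>2 + t\<^sup>2) + cnj z * \<mu> + cnj \<mu> * z + of_real m4 = of_real Q"
      by (simp add: Q_def complex_eq_iff inner_complex_def algebra_simps)
    moreover have "minkowski_inner (herm_vec m1 m4 \<mu>) (hyperboloid_point (z, t)) = Q / t" if "t > 0"
      using that by (simp add: herm_vec_def hyperboloid_point_def minkowski_inner_def Q_def
          inner_complex_def field_simps)
    ultimately show ?thesis
      by (auto simp: hplane_def hyperbolic_plane_def H3_def herm_mat_def)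
  qed
  then show ?thesis by auto
qed

section \<open>The action of \<open>SL(2,\<complex>)\<close> on the upper half-space\<close>

text \<open>The point \<open>(z, t)\<close> as the Hermitian matrix \<open>t\<^sup>-\<^sup>1 [[\<bar>z\<bar>\<^sup>2 + t\<^sup>2, z], [cnj z, 1]]\<close>
  of determinant 1, on which the Poincare extension \<^const>\<open>act_H3\<close> becomes the congruence \<open>P \<mapsto> g P g\<^sup>*\<close>.\<close>
definition point_matrix :: "complex \<times> real \<Rightarrow> complex^2^2" where
  "point_matrix = (\<lambda>(z, t). mat2 ((z * cnj z + of_real t * of_real t) / of_real t) (z / of_real t)
     (cnj z / of_real t) (1 / of_real t))"

lemma inj_on_point_matrix: "inj_on point_matrix H3"
  by (auto simp: inj_on_def H3_def point_matrix_def mat2_eq_iff)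

lemma act_H3_denominator_pos:
  fixes g :: "complex^2^2"
  assumes "det g = 1" and "0 < t"
  shows "0 < (cmod (g$2$1 * z + g$2$2))\<^sup>2 + (cmod (g$2$1))\<^sup>2 * t\<^sup>2"
proof (cases "g$2$1 = 0")
  case True
  then have "g$2$2 \<noteq> 0" using assms(1) by (auto simp: det_2)
  with True show ?thesis by simp
next
  case False
  then have "0 < (cmod (g$2$1))\<^sup>2 * t\<^sup>2" using assms(2) by simp
  then show ?thesis by (simp add: add_nonneg_pos)
qed

lemma act_H3_in_H3:
  assumes "det g = 1" and "p \<in> H3"
  shows "act_H3 g p \<in> H3"
  using assms act_H3_denominator_pos[OF assms(1)] by (auto simp: H3_def act_H3_def Let_def)

lemma point_matrix_act_H3:
  assumes "det g = 1" and "p \<in> H3"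
  shows "point_matrix (act_H3 g p) = g ** point_matrix p ** ctranspose g"
proof -
  obtain z t where p: "p = (z, t)" and "0 < t" using assms(2) by (auto simp: H3_def)
  define al be ga de where "al = g$1$1" and "be = g$1$2" and "ga = g$2$1" and "de = g$2$2"
  have g: "g = mat2 al be ga de" by (simp add: al_def be_def ga_def de_def flip: mat2_eta)
  have det: "al * de - be * ga = 1" using assms(1) by (simp add: g det_mat2)
  have det_cnj: "cnj al * cnj de - cnj be * cnj ga = 1"
    using arg_cong[OF det, of cnj] by simp
  define N where "N = (cmod (ga * z + de))\<^sup>2 + (cmod ga)\<^sup>2 * t\<^sup>2"
  define w where "w = (al * z + be) * cnj (ga * z + de) + al * cnj ga * of_real t * of_real t"
  have act: "act_H3 g p = (w / of_real N, t / N)"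
    by (simp add: p act_H3_def Let_def N_def w_def al_def be_def ga_def de_def power2_eq_square)
  have "0 < N" using act_H3_denominator_pos[OF assms(1) \<open>0 < t\<close>] by (simp add: N_def ga_def de_def)
  define T where "T = complex_of_real t"
  have N: "of_real N = (ga * z + de) * cnj (ga * z + de) + ga * cnj ga * T * T"
    by (simp add: N_def T_def complex_norm_square del: of_real_power) (simp add: power2_eq_square)
  have "T \<noteq> 0" "cnj T = T" using \<open>0 < t\<close> by (simp_all add: T_def)
  have lhs: "point_matrix (act_H3 g p) =
      mat2 ((w * cnj w + T * T) / (of_real N * T)) (w / T) (cnj w / T) (of_real N / T)"
    using \<open>0 < N\<close> \<open>T \<noteq> 0\<close>
    by (simp add: act point_matrix_def mat2_eq_iff flip: T_def) (simp add: field_simps)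
  define S where "S = z * cnj z + T * T"
  have rhs: "g ** point_matrix p ** ctranspose g = mat2
      (((al * S + be * cnj z) * cnj al + (al * z + be) * cnj be) / T)
      (((al * S + be * cnj z) * cnj ga + (al * z + be) * cnj de) / T)
      (((ga * S + de * cnj z) * cnj al + (ga * z + de) * cnj be) / T)
      (((ga * S + de * cnj z) * cnj ga + (ga * z + de) * cnj de) / T)"
    using \<open>T \<noteq> 0\<close>
    by (simp add: g p point_matrix_def mat2_mult mat2_eq_iff S_def flip: T_def)
      (simp add: field_simps)
  \<comment> \<open>the only entry that needs \<open>det g = 1\<close>\<close>
  have e11:
    "w * cnj w + T * T = of_real N * ((al * S + be * cnj z) * cnj al + (al * z + be) * cnj be)"
    unfolding w_def N S_def by (simp add: algebra_simps \<open>cnj T = T\<close> flip: T_def)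
      (use det det_cnj in algebra)
  have e12: "w = (al * S + be * cnj z) * cnj ga + (al * z + be) * cnj de"
    by (simp add: w_def S_def T_def algebra_simps)
  have e21: "cnj w = (ga * S + de * cnj z) * cnj al + (ga * z + de) * cnj be"
    by (simp add: w_def S_def T_def algebra_simps)
  have e22: "of_real N = (ga * S + de * cnj z) * cnj ga + (ga * z + de) * cnj de"
    by (simp add: N S_def algebra_simps)
  have "of_real N \<noteq> (0 :: complex)" using \<open>0 < N\<close> by simp
  then show ?thesis
    unfolding lhs rhs e11 mat2_eq_iff by (simp add: e12[symmetric] e21[symmetric] e22[symmetric])
qed

lemma act_H3_one: "act_H3 (mat 1) p = p"
  by (cases p) (simp add: act_H3_def mat_def)

lemma act_H3_mult:
  assumes "det g = 1" and "det h = 1" and "p \<in> H3"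
  shows "act_H3 (g ** h) p = act_H3 g (act_H3 h p)"
proof (rule inj_onD[OF inj_on_point_matrix])
  have "det (g ** h) = 1" using assms by (simp add: det_mul)
  then show "point_matrix (act_H3 (g ** h) p) = point_matrix (act_H3 g (act_H3 h p))"
    using assms act_H3_in_H3
    by (simp add: point_matrix_act_H3 ctranspose_mult matrix_mul_assoc)
  show "act_H3 (g ** h) p \<in> H3" "act_H3 g (act_H3 h p) \<in> H3"
    using assms \<open>det (g ** h) = 1\<close> by (simp_all add: act_H3_in_H3)
qed

lemma bij_betw_act_H3:
  assumes "det g = 1"
  shows "bij_betw (act_H3 g) H3 H3"
proof -
  define h where "h = mat2 (g$2$2) (- g$1$2) (- g$2$1) (g$1$1)"
  have det: "g$1$1 * g$2$2 - g$1$2 * g$2$1 = 1" using assms by (simp add: det_2)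
  then have "det h = 1" by (simp add: h_def det_mat2 algebra_simps)
  have "g ** h = mat 1" "h ** g = mat 1"
    using det
    by (subst mat2_eta[of g], simp add: h_def mat2_mult mat_1_eq_mat2 mat2_eq_iff algebra_simps)+
  then have "act_H3 h (act_H3 g p) = p" "act_H3 g (act_H3 h p) = p" if "p \<in> H3" for p
    using that assms \<open>det h = 1\<close> by (simp_all flip: act_H3_mult add: act_H3_one)
  then show ?thesis
    using assms \<open>det h = 1\<close> act_H3_in_H3 by (intro bij_betw_byWitness[where f' = "act_H3 h"]) auto
qed

lemma mem_hplane_iff_trace: "p \<in> hplane M \<longleftrightarrow> p \<in> H3 \<and> trace (M ** point_matrix p) = 0"
proof -
  obtain z t where p: "p = (z, t)" by fastforce
  have "trace (M ** point_matrix (z, t)) = (M$1$1 * of_real ((cmod z)\<^sup>2 + t\<^sup>2) + cnj z * M$1$2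
      + M$2$1 * z + M$2$2) / of_real t" if "0 < t"
    using that by (subst mat2_eta[of M])
      (simp add: point_matrix_def mat2_mult trace_mat2 field_simps power2_eq_square
        complex_norm_square[unfolded of_real_power power2_eq_square, symmetric])
  then show ?thesis by (auto simp: p hplane_def H3_def)
qed

lemma hplane_subset_H3: "hplane M \<subseteq> H3"
  by (auto simp: hplane_def H3_def)

lemma act_H3_mem_hplane_iff:
  assumes "det g = 1" and "p \<in> H3"
  shows "act_H3 g p \<in> hplane A \<longleftrightarrow> p \<in> hplane (ctranspose g ** A ** g)"
proof -
  have "trace (A ** point_matrix (act_H3 g p)) =
      trace (ctranspose g ** (A ** (g ** point_matrix p)))"
    using assms
    by (simp add: point_matrix_act_H3 matrix_mul_assoc trace_mul_sym[of _ "ctranspose g"])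
  then show ?thesis
    using assms act_H3_in_H3 by (simp add: mem_hplane_iff_trace matrix_mul_assoc)
qed

lemma act_H3_image_hplane:
  assumes "det g = 1"
  shows "act_H3 g ` hplane (ctranspose g ** A ** g) = hplane A"
proof -
  have "hplane (ctranspose g ** A ** g) = {p \<in> H3. act_H3 g p \<in> hplane A}"
    using hplane_subset_H3 act_H3_mem_hplane_iff[OF assms] by blast
  moreover have "hplane A \<subseteq> act_H3 g ` H3"
    using bij_betw_imp_surj_on[OF bij_betw_act_H3[OF assms]] hplane_subset_H3 by blast
  ultimately show ?thesis by auto
qed

lemma act_H3_hplane_invariant_or_disjoint_iff:
  assumes "det g = 1"
  shows "(act_H3 g ` hplane A = hplane A \<or> act_H3 g ` hplane A \<inter> hplane A = {}) \<longleftrightarrow>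
    (hplane A = hplane (ctranspose g ** A ** g) \<or> hplane A \<inter> hplane (ctranspose g ** A ** g) = {})"
proof -
  let ?f = "act_H3 g" and ?A' = "ctranspose g ** A ** g"
  have inj: "inj_on ?f H3" using bij_betw_act_H3[OF assms] by (rule bij_betw_imp_inj_on)
  have sub: "hplane A \<subseteq> H3" "hplane ?A' \<subseteq> H3" by (rule hplane_subset_H3)+
  have img: "hplane A = ?f ` hplane ?A'" using act_H3_image_hplane[OF assms] by simp
  have "?f ` hplane A = hplane A \<longleftrightarrow> hplane A = hplane ?A'"
    using inj_on_image_eq_iff[OF inj sub] img by simp
  moreover have "?f ` hplane A \<inter> hplane A = ?f ` (hplane A \<inter> hplane ?A')"
    using inj_on_image_Int[OF inj sub] img by simp
  ultimately show ?thesis by simp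
qed

section \<open>Translates of a hyperbolic plane\<close>

lemma hplane_invariant_or_disjoint_iff_trace:
  assumes "det g = 1" and "ctranspose A = A" and "Re (det A) < 0"
  shows "(act_H3 g ` hplane A = hplane A \<or> act_H3 g ` hplane A \<inter> hplane A = {}) \<longleftrightarrow>
    2 \<le> cmod (trace (ctranspose g ** A ** g ** matrix_inv A))"
proof -
  define A' where "A' = ctranspose g ** A ** g"
  have "ctranspose A' = A'"
    using assms(2) by (simp add: A'_def ctranspose_mult matrix_mul_assoc)
  obtain m1 m4 \<mu> n1 n4 \<nu> where A: "A = herm_mat m1 m4 \<mu>" and A': "A' = herm_mat n1 n4 \<nu>"
    using hermitian_eq_herm_mat[OF assms(2)] hermitian_eq_herm_mat[OF \<open>ctranspose A' = A'\<close>] by blast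
  have "det A' = det A"
    using assms(1) by (simp add: A'_def det_mul det_ctranspose)
  then have det: "n1 * n4 - (cmod \<nu>)\<^sup>2 = m1 * m4 - (cmod \<mu>)\<^sup>2"
    unfolding A A' det_herm_mat of_real_eq_iff .
  have neg: "m1 * m4 < (cmod \<mu>)\<^sup>2"
    using assms(3) unfolding A det_herm_mat Re_complex_of_real by simp
  define x y where "x = herm_vec m1 m4 \<mu>" and "y = herm_vec n1 n4 \<nu>"
  have "(act_H3 g ` hplane A = hplane A \<or> act_H3 g ` hplane A \<inter> hplane A = {}) \<longleftrightarrow>
      (hplane A = hplane A' \<or> hplane A \<inter> hplane A' = {})"
    unfolding A'_def by (rule act_H3_hplane_invariant_or_disjoint_iff[OF assms(1)])
  also have "\<dots> \<longleftrightarrow>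
      (hyperbolic_plane x = hyperbolic_plane y \<or> hyperbolic_plane x \<inter> hyperbolic_plane y = {})"
    by (simp add: A A' hplane_herm_mat x_def y_def)
  also have "\<dots> \<longleftrightarrow> (minkowski_inner x x)\<^sup>2 \<le> (minkowski_inner x y)\<^sup>2"
    using neg det
    by (intro hyperbolic_planes_eq_or_disjoint_iff)
      (simp_all add: x_def y_def minkowski_inner_herm_vec_self)
  also have "\<dots> \<longleftrightarrow> 2 \<le> cmod (trace (A' ** matrix_inv A))"
    using two_le_cmod_trace_herm_mat_iff[OF neg] by (simp add: A A' x_def y_def)
  finally show ?thesis by (simp add: A'_def)
qed

theorem corollary3p3:
  fixes d :: nat and G :: "(complex^2^2) set" and A :: "complex^2^2"
    and a c :: int and B :: complex
  assumes "d > 0" and "squarefree d"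
    and "finite_index_subgroup d G"
    and "B \<in> Od d"
    and "A$1$1 = of_int a" and "A$1$2 = B" and "A$2$1 = cnj B" and "A$2$2 = of_int c"
    and "(cmod B)^2 - real_of_int (a * c) > 0"
  shows "embedded_surface G A \<longleftrightarrow>
         (\<forall>g\<in>G. cmod (trace (ctranspose g ** A ** g ** matrix_inv A)) \<ge> 2)"
proof -
  have A: "A = mat2 (of_int a) B (cnj B) (of_int c)"
    using mat2_eta[of A] assms(5-8) by simp
  have "ctranspose A = A" by (simp add: A)
  moreover have "Re (det A) < 0"
    using assms(9) cmod_power2[of B] by (simp add: A det_mat2 power2_eq_square)
  moreover have "det g = 1" if "g \<in> G" for g
    using assms(3) that by (auto simp: finite_index_subgroup_def SL2_Od_def)
  ultimately show ?thesis
    unfolding embedded_surface_def using hplane_invariant_or_disjoint_iff_trace by blast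
qed

end
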